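(* Let $(X_B,X_C,X_R)$ be an OCC (not necessarily tight) in a graph $G$ and let $(A_B,A_C,A_R)$ be a tight OCC in $G$. Then $|A_C \cap X_B| \leq |X_C|$.
   Context: An OCT of $G$ is a set $S \subseteq V(G)$ with $G - S$ bipartite; $\mathrm{oct}(G)$ is its minimum size. An odd cycle cut (OCC) of $G$ is a partition $(X_B, X_C, X_R)$ of $V(G)$ such that $G[X_B]$ is bipartite, there is no edge between $X_B$ and $X_R$, and $X_B \cup X_C \neq \emptyset$. It is tight if $|X_C| = \mathrm{oct}(G[X_B \cup X_C])$. *)

theory Defs
  imports Main
begin

definition graph :: "'a set \<Rightarrow> ('a \<Rightarrow> 'a \<Rightarrow> bool) \<Rightarrow> bool" where
  "graph V E \<longleftrightarrow> finite V \<and> (\<forall>u v. E u v \<longrightarrow> u \<in> V \<and> v \<in> V \<and> u \<noteq> v \<and> E v u)"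

definition bipartite_on :: "('a \<Rightarrow> 'a \<Rightarrow> bool) \<Rightarrow> 'a set \<Rightarrow> bool" where
  "bipartite_on E S \<longleftrightarrow> (\<exists>f :: 'a \<Rightarrow> bool. \<forall>u\<in>S. \<forall>v\<in>S. E u v \<longrightarrow> f u \<noteq> f v)"

definition oct :: "('a \<Rightarrow> 'a \<Rightarrow> bool) \<Rightarrow> 'a set \<Rightarrow> nat" where
  "oct E S = Min {card T | T. T \<subseteq> S \<and> bipartite_on E (S - T)}"

definition is_occ :: "'a set \<Rightarrow> ('a \<Rightarrow> 'a \<Rightarrow> bool) \<Rightarrow> 'a set \<Rightarrow> 'a set \<Rightarrow> 'a set \<Rightarrow> bool" where
  "is_occ V E XB XC XR \<longleftrightarrow>
     XB \<union> XC \<union> XR = V \<and> XB \<inter> XC = {} \<and> XB \<inter> XR = {} \<and> XC \<inter> XR = {} \<and>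
     bipartite_on E XB \<and> (\<forall>u\<in>XB. \<forall>v\<in>XR. \<not> E u v) \<and> XB \<union> XC \<noteq> {}"

definition is_tight_occ :: "'a set \<Rightarrow> ('a \<Rightarrow> 'a \<Rightarrow> bool) \<Rightarrow> 'a set \<Rightarrow> 'a set \<Rightarrow> 'a set \<Rightarrow> bool" where
  "is_tight_occ V E XB XC XR \<longleftrightarrow> is_occ V E XB XC XR \<and> card XC = oct E (XB \<union> XC)"

end

theory Submission
  imports Defs
begin

text \<open>Let \<open>T = (A\<^sub>C - X\<^sub>B) \<union> (X\<^sub>C \<inter> (A\<^sub>B \<union> A\<^sub>C))\<close>. What remains of
  \<open>A\<^sub>B \<union> A\<^sub>C\<close> after removing \<open>T\<close> lies in \<open>X\<^sub>B \<union> (A\<^sub>B \<inter> X\<^sub>R)\<close>, a union of two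
  bipartite sets with no edges between them. So \<open>T\<close> is an odd cycle transversal of
  \<open>G[A\<^sub>B \<union> A\<^sub>C]\<close>, and tightness gives \<open>|A\<^sub>C| \<le> |T| \<le> |A\<^sub>C - X\<^sub>B| + |X\<^sub>C|\<close>.\<close>

lemma bipartite_on_subset:
  fixes E :: "'a \<Rightarrow> 'a \<Rightarrow> bool"
  assumes "bipartite_on E B" and "A \<subseteq> B"
  shows "bipartite_on E A"
proof -
  obtain f :: "'a \<Rightarrow> bool" where "\<forall>u\<in>B. \<forall>v\<in>B. E u v \<longrightarrow> f u \<noteq> f v"
    using assms(1) unfolding bipartite_on_def by blast
  then show ?thesis
    using assms(2) unfolding bipartite_on_def by blast
qed

lemma bipartite_on_Un:
  fixes E :: "'a \<Rightarrow> 'a \<Rightarrow> bool"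
  assumes "bipartite_on E A" and "bipartite_on E B"
    and "\<And>u v. u \<in> A \<Longrightarrow> v \<in> B \<Longrightarrow> \<not> E u v \<and> \<not> E v u"
  shows "bipartite_on E (A \<union> B)"
proof -
  obtain f :: "'a \<Rightarrow> bool" where f: "\<forall>u\<in>A. \<forall>v\<in>A. E u v \<longrightarrow> f u \<noteq> f v"
    using assms(1) unfolding bipartite_on_def by blast
  obtain g :: "'a \<Rightarrow> bool" where g: "\<forall>u\<in>B. \<forall>v\<in>B. E u v \<longrightarrow> g u \<noteq> g v"
    using assms(2) unfolding bipartite_on_def by blast
  show ?thesis
    unfolding bipartite_on_def
  proof (intro exI[of _ "\<lambda>u. if u \<in> A then f u else g u"] ballI impI)
    fix u v
    assume "u \<in> A \<union> B" "v \<in> A \<union> B" "E u v"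
    then consider "u \<in> A" "v \<in> A" | "u \<in> B" "v \<in> B" "u \<notin> A" "v \<notin> A"
      using assms(3) by blast
    then show "(if u \<in> A then f u else g u) \<noteq> (if v \<in> A then f v else g v)"
      using f g \<open>E u v\<close> by cases auto
  qed
qed

lemma oct_le_card:
  assumes "finite S" and "T \<subseteq> S" and "bipartite_on E (S - T)"
  shows "oct E S \<le> card T"
proof -
  have "{card T' | T'. T' \<subseteq> S \<and> bipartite_on E (S - T')} \<subseteq> card ` Pow S"
    by blast
  then have "finite {card T' | T'. T' \<subseteq> S \<and> bipartite_on E (S - T')}"
    using assms(1) finite_subset by blast
  then show ?thesis
    unfolding oct_def by (rule Min_le) (use assms(2,3) in blast)
qed

lemma occ_bipartite_Un_Int_right:
  assumes "graph V E" and "is_occ V E XB XC XR" and "bipartite_on E Y"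
  shows "bipartite_on E (XB \<union> (Y \<inter> XR))"
proof (rule bipartite_on_Un)
  show "bipartite_on E XB"
    using assms(2) unfolding is_occ_def by blast
  show "bipartite_on E (Y \<inter> XR)"
    by (rule bipartite_on_subset[OF assms(3)]) blast
  fix u v
  assume "u \<in> XB" "v \<in> Y \<inter> XR"
  then have "\<not> E u v"
    using assms(2) unfolding is_occ_def by blast
  moreover have "E v u \<Longrightarrow> E u v"
    using assms(1) unfolding graph_def by blast
  ultimately show "\<not> E u v \<and> \<not> E v u"
    by blast
qed

theorem mainTheorem9:
  fixes V :: "'a set" and E :: "'a \<Rightarrow> 'a \<Rightarrow> bool"
  assumes "graph V E"
    and "is_occ V E XB XC XR"
    and "is_tight_occ V E AB AC AR"
  shows "card (AC \<inter> XB) \<le> card XC"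
proof -
  define S where "S = AB \<union> AC"
  define T where "T = (AC - XB) \<union> (XC \<inter> S)"
  have "finite V" using assms(1) unfolding graph_def by blast
  have tight: "S \<subseteq> V" "bipartite_on E AB" "card AC = oct E S"
    using assms(3) unfolding is_tight_occ_def is_occ_def S_def by blast+
  have "finite S" "finite XC"
    using \<open>finite V\<close> tight(1) assms(2) finite_subset unfolding is_occ_def by blast+
  have "S - T \<subseteq> XB \<union> (AB \<inter> XR)"
    using tight(1) assms(2) unfolding S_def T_def is_occ_def by blast
  then have "bipartite_on E (S - T)"
    by (rule bipartite_on_subset[OF occ_bipartite_Un_Int_right[OF assms(1,2) tight(2)]])
  moreover have "T \<subseteq> S"
    unfolding T_def S_def by blast
  ultimately have "card AC \<le> card T"
    using oct_le_card[OF \<open>finite S\<close>] tight(3) by simp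
  also have "\<dots> \<le> card (AC - XB) + card XC"
    using card_Un_le[of "AC - XB" "XC \<inter> S"] card_mono[OF \<open>finite XC\<close>, of "XC \<inter> S"]
    unfolding T_def by simp
  finally show ?thesis
    using card_Int_Diff[of AC XB] \<open>finite S\<close> unfolding S_def by simp
qed

end
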